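(* Let $\mathbb{X},\mathbb{Y}$ be finite-dimensional real polyhedral Banach spaces and let $T\in\mathbb{L}(\mathbb{X},\mathbb{Y})$ have rank at least $2$. Then the following are equivalent: (i) $T$ preserves parallel pairs; (ii) $T$ preserves TEA pairs; (iii) for each facet $F$ of $B_{\mathbb{X}}$ there exists $u\in F$ such that $J(Tu)\subset J(Tv)$ for all $v\in F\setminus\ker T$.
   Context: A finite-dimensional Banach space is polyhedral if its unit ball has finitely many extreme points. A face of $B_{\mathbb{X}}$ is a nonempty convex subset $F\subset S_{\mathbb{X}}$ such that whenever $x_1,x_2\in S_{\mathbb{X}}$, $0<t<1$ and $(1-t)x_1+tx_2\in F$, then $x_1,x_2\in F$; a facet is a maximal face. For non-zero $y$, $J(y)=\{g\in S_{\mathbb{Y}^*}: g(y)=\|y\|\}$. $(x,y)$ is a parallel pair if $\|x+\lambda y\|=\|x\|+\|y\|$ for some $\lambda$ with $|\lambda|=1$; a TEA pair if $\|x+y\|=\|x\|+\|y\|$. $T$ preserves parallel (resp. TEA) pairs if $(x,y)$ parallel (resp. TEA) in $\mathbb{X}$ implies $(Tx,Ty)$ parallel (resp. TEA) in $\mathbb{Y}$. *)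

theory Defs
  imports "HOL-Analysis.Analysis"
begin

definition fin_dim_space :: "'a::real_vector itself \<Rightarrow> bool" where
  "fin_dim_space _ \<longleftrightarrow> (\<exists>B::'a set. finite B \<and> span B = UNIV)"

definition polyhedral_space :: "'a::real_normed_vector itself \<Rightarrow> bool" where
  "polyhedral_space _ \<longleftrightarrow> finite {x::'a. x extreme_point_of cball 0 1}"

definition ball_face :: "'a::real_normed_vector set \<Rightarrow> bool" where
  "ball_face F \<longleftrightarrow> F \<noteq> {} \<and> convex F \<and> F \<subseteq> sphere 0 1 \<and>
     (\<forall>x1\<in>sphere 0 1. \<forall>x2\<in>sphere 0 1. \<forall>t::real. 0 < t \<and> t < 1 \<and>
        (1 - t) *\<^sub>R x1 + t *\<^sub>R x2 \<in> F \<longrightarrow> x1 \<in> F \<and> x2 \<in> F)"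

definition ball_facet :: "'a::real_normed_vector set \<Rightarrow> bool" where
  "ball_facet F \<longleftrightarrow> ball_face F \<and> (\<forall>G. ball_face G \<and> F \<subseteq> G \<longrightarrow> G = F)"

definition supp_J :: "'b::real_normed_vector \<Rightarrow> ('b \<Rightarrow> real) set" where
  "supp_J y = {g. bounded_linear g \<and> onorm g = 1 \<and> g y = norm y}"

definition parallel_pair :: "'a::real_normed_vector \<Rightarrow> 'a \<Rightarrow> bool" where
  "parallel_pair x y \<longleftrightarrow> (\<exists>c::real. \<bar>c\<bar> = 1 \<and> norm (x + c *\<^sub>R y) = norm x + norm y)"

definition tea_pair :: "'a::real_normed_vector \<Rightarrow> 'a \<Rightarrow> bool" where
  "tea_pair x y \<longleftrightarrow> norm (x + y) = norm x + norm y"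

end

(*
  TEA pairs are exactly the pairs with a common norming functional (Hahn-Banach in finite
  dimension); hence a nonzero TEA pair normalizes into a common facet of the unit ball, and a
  linear map preserves TEA pairs as soon as it maps every facet to a set of pairwise TEA vectors.

  (ii) => (iii): every facet F has a point u in its relative (algebraic) interior, so u lies
  strictly inside a segment [w, v] of F for each v in F; the norm of T is affine along it, so a
  functional norming T u norms T v as well.  (iii) => (ii): a functional in J(T u) norms T p
  and T q simultaneously for all p, q in F.  Parallel pairs are TEA pairs up to the sign of the
  second vector, which gives (ii) => (i).

  (i) => (ii): T maps a facet F onto a convex set of pairwise parallel vectors.  On a segment
  of it avoiding 0, nearby points cannot be anti-TEA, and the norming functionals of
  overlapping short subsegments glue together, so the endpoints form a TEA pair.  Since the
  unit ball has finitely many extreme points, each facet spans the space, so by the rank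
  condition T F is not contained in a line; a third point off the line then rules out two
  opposite points of T F.
*)

theory Submission
  imports Defs
begin

definition dual_unit_ball :: "('a::real_normed_vector \<Rightarrow> real) set" where
  "dual_unit_ball = {g. linear g \<and> (\<forall>x. g x \<le> norm x)}"

lemma dual_unit_ballD:
  assumes "g \<in> dual_unit_ball"
  shows "linear g" and "g x \<le> norm x" and "\<bar>g x\<bar> \<le> norm x"
proof -
  show lg: "linear g" and "g x \<le> norm x" for x
    using assms by (auto simp: dual_unit_ball_def)
  then show "\<bar>g x\<bar> \<le> norm x"
    using \<open>g (- x) \<le> norm (- x)\<close> by (simp add: linear_neg[OF lg] abs_le_iff)
qed

lemma dual_unit_ball_bounded_linear:
  "g \<in> dual_unit_ball \<Longrightarrow> bounded_linear g"
  by (rule bounded_linear_intro[of g 1])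
     (auto simp: linear_add linear_scale dual_unit_ballD)

subsection \<open>Finite-dimensional normed spaces\<close>

lemma fin_dim_space_obtain_finite_basis:
  assumes "fin_dim_space TYPE('a)"
  obtains B :: "'a::real_vector set" where "finite B" "independent B" "B \<subseteq> V" "V \<subseteq> span B"
proof -
  obtain S :: "'a set" where S: "finite S" "span S = UNIV"
    using assms unfolding fin_dim_space_def by blast
  obtain B where B: "B \<subseteq> V" "independent B" "V \<subseteq> span B"
    using maximal_independent_subset[of V] by blast
  have "finite B" using independent_span_bound[OF S(1) B(2)] S(2) by blast
  then show ?thesis using B that by blast
qed

lemma span_dist_bounded_below:
  fixes b :: "'a::real_normed_vector"
  assumes K: "compact (span S \<inter> cball 0 (norm b + 1))" and b: "b \<notin> span S"
  obtains d where "d > 0" "\<And>s. s \<in> span S \<Longrightarrow> d \<le> norm (b - s)"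
proof -
  let ?K = "span S \<inter> cball 0 (norm b + 1)"
  have "?K \<noteq> {}" using span_zero[of S] by force
  then have pos: "infdist b ?K > 0"
    using in_closed_iff_infdist_zero[OF compact_imp_closed[OF K]] infdist_nonneg[of b ?K] b
    by (metis IntD1 order_less_le)
  have "min 1 (infdist b ?K) \<le> norm (b - s)" if s: "s \<in> span S" for s
  proof (cases "norm s \<le> norm b + 1")
    case True
    then have "infdist b ?K \<le> dist b s" using s by (intro infdist_le) simp
    then show ?thesis by (simp add: dist_norm)
  next
    case False
    then show ?thesis using norm_triangle_ineq2[of s b] by (simp add: norm_minus_commute)
  qed
  then show ?thesis using that[of "min 1 (infdist b ?K)"] pos by simp
qed

lemma span_insert_bounded_decomposition:
  fixes b :: "'a::real_normed_vector"
  assumes d: "d > 0" "\<And>s. s \<in> span S \<Longrightarrow> d \<le> norm (b - s)"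
    and x: "x \<in> span (insert b S)" "norm x \<le> r"
  obtains s k where "s \<in> span S" "x = s + k *\<^sub>R b" "\<bar>k\<bar> \<le> r / d" "norm s \<le> r + r / d * norm b"
proof -
  obtain k where s: "x - k *\<^sub>R b \<in> span S" using x(1) span_insert[of b S] by auto
  have k: "\<bar>k\<bar> \<le> r / d"
  proof (cases "k = 0")
    case True
    have "0 \<le> r" using norm_ge_zero[of x] x(2) by linarith
    then show ?thesis using True d(1) by simp
  next
    case False
    have "- (1/k) *\<^sub>R (x - k *\<^sub>R b) \<in> span S" using s by (rule span_scale)
    then have "d \<le> norm (b - (- (1/k) *\<^sub>R (x - k *\<^sub>R b)))" by (rule d(2))
    also have "\<dots> = norm x / \<bar>k\<bar>" using False by (simp add: algebra_simps)
    finally have "\<bar>k\<bar> * d \<le> r" using False x(2) by (simp add: field_simps)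
    then show ?thesis using d(1) by (simp add: field_simps)
  qed
  have "norm (x - k *\<^sub>R b) \<le> norm x + \<bar>k\<bar> * norm b"
    using norm_triangle_ineq4[of x "k *\<^sub>R b"] by simp
  also have "\<dots> \<le> r + r / d * norm b"
    using x(2) mult_right_mono[OF k norm_ge_zero[of b]] by simp
  finally show ?thesis using that[OF s _ k] by simp
qed

lemma compact_span_Int_cball:
  fixes S :: "'a::real_normed_vector set"
  assumes "finite S"
  shows "compact (span S \<inter> cball 0 r)"
  using assms
proof (induction S arbitrary: r rule: finite_induct)
  case empty
  have "span {} \<inter> cball (0::'a) r \<subseteq> {0}" by auto
  then show ?case using finite_subset finite_imp_compact by blast
next
  case (insert b S)
  show ?case
  proof (cases "b \<in> span S")
    case True
    then show ?thesis using insert.IH by (simp add: span_redundant)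
  next
    case False
    obtain d where d: "d > 0" "\<And>s. s \<in> span S \<Longrightarrow> d \<le> norm (b - s)"
      using span_dist_bounded_below[OF insert.IH False] by blast
    define K where "K = (\<lambda>(s, k). s + k *\<^sub>R b) `
      ((span S \<inter> cball 0 (r + r / d * norm b)) \<times> {- (r / d)..r / d})"
    have "compact K" unfolding K_def case_prod_unfold
      by (intro compact_continuous_image compact_Times insert.IH compact_Icc continuous_intros)
    moreover have "span (insert b S) \<inter> cball 0 r = K \<inter> cball 0 r"
    proof
      have "s + k *\<^sub>R b \<in> span (insert b S)" if "s \<in> span S" for s k
        using that by (meson span_add span_scale span_base insertI1 span_mono subset_insertI subsetD)
      then show "K \<inter> cball 0 r \<subseteq> span (insert b S) \<inter> cball 0 r"
        by (auto simp: K_def)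
      show "span (insert b S) \<inter> cball 0 r \<subseteq> K \<inter> cball 0 r"
      proof
        fix x assume x: "x \<in> span (insert b S) \<inter> cball 0 r"
        then have "x \<in> span (insert b S)" "norm x \<le> r" by auto
        then obtain s k where "s \<in> span S" "x = s + k *\<^sub>R b" "\<bar>k\<bar> \<le> r / d"
            "norm s \<le> r + r / d * norm b"
          using span_insert_bounded_decomposition[OF d] by blast
        then show "x \<in> K \<inter> cball 0 r"
          using x unfolding K_def by (intro IntI image_eqI[of _ _ "(s, k)"]) auto
      qed
    qed
    ultimately show ?thesis by (simp add: compact_Int_closed)
  qed
qed

lemma fin_dim_compact_cball:
  assumes "fin_dim_space TYPE('a::real_normed_vector)"
  shows "compact (cball (0::'a) r)"
proof -
  obtain B :: "'a set" where "finite B" "span B = UNIV"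
    using assms unfolding fin_dim_space_def by blast
  then show ?thesis using compact_span_Int_cball[of B r] by simp
qed

lemma fin_dim_linear_bounded:
  fixes f :: "'a::real_normed_vector \<Rightarrow> real"
  assumes fd: "fin_dim_space TYPE('a)" and lf: "linear f"
  shows "bounded_linear f"
proof (cases "\<forall>x. f x = 0")
  case True
  then have "f = (\<lambda>_. 0)" by (simp add: fun_eq_iff)
  then show ?thesis using bounded_linear_zero by simp
next
  case False
  then obtain a0 where a0: "f a0 \<noteq> 0" by blast
  define a where "a = (1 / f a0) *\<^sub>R a0"
  have fa: "f a = 1" using a0 by (simp add: a_def linear_scale[OF lf])
  obtain K where K: "finite K" "K \<subseteq> {x. f x = 0}" "{x. f x = 0} \<subseteq> span K"
    using fin_dim_space_obtain_finite_basis[OF fd] by metis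
  have "span K \<subseteq> {x. f x = 0}"
    using linear_eq_on_span[OF lf linear_zero] K(2) by blast
  then have "a \<notin> span K" using fa by auto
  then obtain d where d: "d > 0" "\<And>s. s \<in> span K \<Longrightarrow> d \<le> norm (a - s)"
    using span_dist_bounded_below[OF compact_span_Int_cball[OF K(1)]] by blast
  have "\<bar>f x\<bar> \<le> norm x * (1 / d)" for x
  proof (cases "f x = 0")
    case True then show ?thesis using d by simp
  next
    case False
    have "f (a - (1 / f x) *\<^sub>R x) = 0"
      using False fa by (simp add: linear_diff[OF lf] linear_scale[OF lf])
    then have "d \<le> norm (a - (a - (1 / f x) *\<^sub>R x))" using K(3) by (intro d(2)) blast
    also have "\<dots> = norm x / \<bar>f x\<bar>" by simp
    finally show ?thesis using False d(1) by (simp add: field_simps)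
  qed
  then show ?thesis
    by (intro bounded_linear_intro[of f "1 / d"]) (auto simp: linear_add[OF lf] linear_scale[OF lf])
qed

subsection \<open>Hahn--Banach in finite dimension\<close>

lemma exists_linear_functional_vanishing_on_span:
  fixes x :: "'a::real_vector"
  assumes x: "x \<notin> span S"
  obtains \<phi> :: "'a \<Rightarrow> real" where "linear \<phi>" "\<And>v. v \<in> span S \<Longrightarrow> \<phi> v = 0" "\<phi> x = 1"
proof -
  obtain B where B: "B \<subseteq> S" "independent B" "S \<subseteq> span B"
    using maximal_independent_subset[of S] by blast
  have spB: "span B = span S"
    using B by (metis span_mono span_span subset_antisym)
  have ind: "independent (insert x B)"
    using independent_insertI[OF _ B(2)] x spB by metis
  obtain \<phi> :: "'a \<Rightarrow> real" where
    \<phi>: "linear \<phi>" "\<forall>v\<in>insert x B. \<phi> v = (if v = x then 1 else 0)"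
    using linear_independent_extend[OF ind, of "\<lambda>v. if v = x then 1 else 0"] by blast
  have "x \<notin> B" using x spB span_base by blast
  then have "\<forall>v\<in>B. \<phi> v = 0" using \<phi>(2) by auto
  then have "\<phi> v = 0" if "v \<in> span S" for v
    using linear_eq_on_span[OF \<phi>(1) linear_zero, of B v] that spB by simp
  then show ?thesis using that \<phi> by simp
qed

lemma hahn_banach_step_constant:
  fixes f :: "'a::real_normed_vector \<Rightarrow> real"
  assumes lf: "linear f" and bnd: "\<And>m. m \<in> span S \<Longrightarrow> f m \<le> norm m"
  obtains c where "\<And>m. m \<in> span S \<Longrightarrow> f m - norm (m - x) \<le> c"
    "\<And>m. m \<in> span S \<Longrightarrow> c \<le> norm (m + x) - f m"
proof -
  have sep: "f m - norm (m - x) \<le> norm (m' + x) - f m'" if "m \<in> span S" "m' \<in> span S" for m m'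
  proof -
    have "f m + f m' \<le> norm ((m - x) + (m' + x))"
      using bnd[of "m + m'"] that by (simp add: span_add linear_add[OF lf])
    then show ?thesis using norm_triangle_ineq[of "m - x" "m' + x"] by simp
  qed
  define c where "c = (SUP m\<in>span S. f m - norm (m - x))"
  have "f m - norm (m - x) \<le> c" if "m \<in> span S" for m
    unfolding c_def using sep[OF _ span_zero] that by (intro cSUP_upper bdd_aboveI2) auto
  moreover have "c \<le> norm (m + x) - f m" if "m \<in> span S" for m
    unfolding c_def using sep that span_zero by (intro cSUP_least) auto
  ultimately show ?thesis using that by blast
qed

lemma hahn_banach_step:
  fixes f :: "'a::real_normed_vector \<Rightarrow> real"
  assumes lf: "linear f" and bnd: "\<And>m. m \<in> span S \<Longrightarrow> f m \<le> norm m" and x: "x \<notin> span S"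
  obtains f' where "linear f'" "\<And>m. m \<in> span S \<Longrightarrow> f' m = f m"
    "\<And>v. v \<in> span (insert x S) \<Longrightarrow> f' v \<le> norm v"
proof -
  obtain \<phi> :: "'a \<Rightarrow> real" where \<phi>: "linear \<phi>" "\<And>v. v \<in> span S \<Longrightarrow> \<phi> v = 0" "\<phi> x = 1"
    using exists_linear_functional_vanishing_on_span[OF x] by blast
  obtain c where c_lower: "\<And>m. m \<in> span S \<Longrightarrow> f m - norm (m - x) \<le> c"
    and c_upper: "\<And>m. m \<in> span S \<Longrightarrow> c \<le> norm (m + x) - f m"
    using hahn_banach_step_constant[OF lf bnd] by blast
  define f' where "f' v = f v + (c - f x) * \<phi> v" for v
  have lf': "linear f'" unfolding f'_def
    by (intro linearI) (simp_all add: linear_add[OF lf] linear_add[OF \<phi>(1)]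
        linear_scale[OF lf] linear_scale[OF \<phi>(1)] algebra_simps)
  have "f' v \<le> norm v" if vS: "v \<in> span (insert x S)" for v
  proof -
    obtain k where "v - k *\<^sub>R x \<in> span S" using vS span_insert[of x S] by auto
    then obtain m where m: "m \<in> span S" and v: "v = m + k *\<^sub>R x" by force
    have "\<phi> v = k" using \<phi> m v by (simp add: linear_add[OF \<phi>(1)] linear_scale[OF \<phi>(1)])
    then have f'v: "f' v = f m + k * c"
      by (simp add: f'_def v linear_add[OF lf] linear_scale[OF lf] algebra_simps)
    have fm: "f (r *\<^sub>R m) = r * f m" and mS: "r *\<^sub>R m \<in> span S" for r
      using m by (simp_all add: linear_scale[OF lf] span_scale)
    consider "k > 0" | "k < 0" | "k = 0" by linarith
    then show ?thesis
    proof cases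
      case 1
      have "(1 / k) *\<^sub>R m + x = (1 / k) *\<^sub>R v" using 1 by (simp add: v algebra_simps)
      then have "c \<le> norm v / k - f m / k" using c_upper[OF mS, of "1 / k"] fm 1 by simp
      then show ?thesis using 1 f'v by (simp add: field_simps)
    next
      case 2
      have "(- 1 / k) *\<^sub>R m - x = (- 1 / k) *\<^sub>R v" using 2 by (simp add: v algebra_simps)
      then have "- f m / k - norm v / - k \<le> c" using c_lower[OF mS, of "- 1 / k"] 2
        by (simp add: linear_neg[OF lf] linear_scale[OF lf])
      then show ?thesis using 2 f'v by (simp add: field_simps)
    next
      case 3
      then show ?thesis using f'v bnd m v by simp
    qed
  qed
  then show ?thesis using that[OF lf'] \<phi>(2) by (simp add: f'_def)
qed

lemma hahn_banach_finite_extension: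
  fixes f :: "'a::real_normed_vector \<Rightarrow> real"
  assumes "finite B" and "linear f" and "\<And>m. m \<in> span S \<Longrightarrow> f m \<le> norm m"
  shows "\<exists>f'. linear f' \<and> (\<forall>m\<in>span S. f' m = f m) \<and> (\<forall>v\<in>span (B \<union> S). f' v \<le> norm v)"
  using assms(1)
proof (induction B rule: finite_induct)
  case empty
  then show ?case using assms(2,3) by auto
next
  case (insert b B)
  then obtain g where g: "linear g" "\<forall>m\<in>span S. g m = f m" "\<forall>v\<in>span (B \<union> S). g v \<le> norm v"
    by blast
  show ?case
  proof (cases "b \<in> span (B \<union> S)")
    case True
    then have "span (insert b B \<union> S) = span (B \<union> S)" by (simp add: span_redundant)
    then show ?thesis using g by auto
  next
    case False
    obtain g' where g': "linear g'" "\<And>m. m \<in> span (B \<union> S) \<Longrightarrow> g' m = g m"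
      "\<And>v. v \<in> span (insert b (B \<union> S)) \<Longrightarrow> g' v \<le> norm v"
      using hahn_banach_step[OF g(1) _ False] g(3) by blast
    have "\<forall>m\<in>span S. g' m = f m" using g(2) g'(2) span_mono[of S "B \<union> S"] by auto
    then show ?thesis using g' by (intro exI[of _ g']) auto
  qed
qed

lemma fin_dim_norming_functional:
  fixes y :: "'a::real_normed_vector"
  assumes fd: "fin_dim_space TYPE('a)"
  obtains g where "g \<in> dual_unit_ball" "g y = norm y"
proof (cases "y = 0")
  case True
  then show ?thesis using that[of "\<lambda>_. 0"] by (simp add: dual_unit_ball_def linear_zero)
next
  case False
  then obtain \<phi> :: "'a \<Rightarrow> real" where \<phi>: "linear \<phi>" "\<phi> y = 1"
    using exists_linear_functional_vanishing_on_span[of y "{}"] by auto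
  define f where "f v = norm y * \<phi> v" for v
  have lf: "linear f" unfolding f_def
    by (intro linearI) (simp_all add: linear_add[OF \<phi>(1)] linear_scale[OF \<phi>(1)] algebra_simps)
  have bnd: "f v \<le> norm v" if v: "v \<in> span {y}" for v
  proof -
    obtain k where "v = k *\<^sub>R y" using v by (auto simp: span_singleton)
    then show ?thesis using \<phi> mult_right_mono[OF abs_ge_self[of k] norm_ge_zero[of y]]
      by (simp add: f_def linear_scale[OF \<phi>(1)] mult.commute)
  qed
  obtain B :: "'a set" where B: "finite B" "span B = UNIV"
    using fd unfolding fin_dim_space_def by blast
  obtain g where "linear g" "\<forall>m\<in>span {y}. g m = f m" "\<forall>v\<in>span (B \<union> {y}). g v \<le> norm v"
    using hahn_banach_finite_extension[OF B(1) lf bnd] by blast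
  moreover have "span (B \<union> {y}) = UNIV" using \<open>span B = UNIV\<close> span_mono[of B "B \<union> {y}"] by auto
  ultimately show ?thesis using that[of g] \<phi>(2) by (simp add: dual_unit_ball_def f_def span_base)
qed

subsection \<open>Supporting functionals and TEA pairs\<close>

lemma supp_JD:
  assumes "g \<in> supp_J y"
  shows "g \<in> dual_unit_ball" and "g y = norm y"
proof -
  have "bounded_linear g" "onorm g = 1" "g y = norm y" using assms by (auto simp: supp_J_def)
  moreover have "g x \<le> norm x" for x
    using onorm[OF \<open>bounded_linear g\<close>, of x] \<open>onorm g = 1\<close> abs_le_D1 by fastforce
  ultimately show "g \<in> dual_unit_ball" "g y = norm y"
    by (auto simp: dual_unit_ball_def bounded_linear.linear)
qed

lemma supp_J_iff:
  assumes "y \<noteq> 0"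
  shows "g \<in> supp_J y \<longleftrightarrow> g \<in> dual_unit_ball \<and> g y = norm y"
proof
  assume g: "g \<in> dual_unit_ball \<and> g y = norm y"
  then have bl: "bounded_linear g" using dual_unit_ball_bounded_linear by blast
  have "onorm g \<le> 1" using g by (intro onorm_bound) (auto dest: dual_unit_ballD(3))
  moreover have "norm y \<le> onorm g * norm y" using onorm[OF bl, of y] g by simp
  then have "1 \<le> onorm g" using assms by simp
  ultimately show "g \<in> supp_J y" using bl g by (simp add: supp_J_def)
qed (use supp_JD in blast)

lemma supp_J_nonempty:
  fixes y z :: "'a::real_normed_vector"
  assumes fd: "fin_dim_space TYPE('a)" and z: "z \<noteq> 0"
  shows "supp_J y \<noteq> {}"
proof (cases "y = 0")
  case True
  obtain g where g: "g \<in> dual_unit_ball" "g z = norm z"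
    using fin_dim_norming_functional[OF fd] by blast
  then have "g \<in> supp_J z" using z supp_J_iff by blast
  then have "g \<in> supp_J y" using True linear_0[OF dual_unit_ballD(1)[OF g(1)]] by (simp add: supp_J_def)
  then show ?thesis by blast
next
  case False
  then show ?thesis using fin_dim_norming_functional[OF fd] supp_J_iff by blast
qed

lemma tea_pair_if_common_norming:
  assumes "g \<in> dual_unit_ball" "g x = norm x" "g y = norm y"
  shows "tea_pair x y"
  using assms dual_unit_ballD(2)[OF assms(1), of "x + y"] norm_triangle_ineq[of x y]
  by (simp add: tea_pair_def linear_add[OF dual_unit_ballD(1)])

lemma fin_dim_tea_pair_iff_common_norming:
  fixes x y :: "'a::real_normed_vector"
  assumes "fin_dim_space TYPE('a)"
  shows "tea_pair x y \<longleftrightarrow> (\<exists>g\<in>dual_unit_ball. g x = norm x \<and> g y = norm y)"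
proof
  assume t: "tea_pair x y"
  obtain g where g: "g \<in> dual_unit_ball" "g (x + y) = norm (x + y)"
    using fin_dim_norming_functional[OF assms] by blast
  then have "g x + g y = norm x + norm y"
    using t by (simp add: tea_pair_def linear_add[OF dual_unit_ballD(1)])
  moreover have "g x \<le> norm x" "g y \<le> norm y" using dual_unit_ballD(2)[OF g(1)] by auto
  ultimately have "g x = norm x" "g y = norm y" by linarith+
  then show "\<exists>g\<in>dual_unit_ball. g x = norm x \<and> g y = norm y" using g(1) by blast
qed (use tea_pair_if_common_norming in blast)

lemma tea_pair_commute: "tea_pair x y \<longleftrightarrow> tea_pair y x"
  by (simp add: tea_pair_def add.commute)

lemma tea_pair_scaleR:
  fixes x y :: "'a::real_normed_vector"
  assumes t: "tea_pair x y" and "0 \<le> a" "0 \<le> b"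
  shows "tea_pair (a *\<^sub>R x) (b *\<^sub>R y)"
proof -
  have le: "tea_pair (a *\<^sub>R x) (b *\<^sub>R y)" if "tea_pair x y" "0 \<le> b" "b \<le> a" for x y :: 'a and a b
  proof -
    have "a *\<^sub>R x + b *\<^sub>R y = a *\<^sub>R (x + y) - (a - b) *\<^sub>R y" by (simp add: algebra_simps)
    then have "a * norm (x + y) - (a - b) * norm y \<le> norm (a *\<^sub>R x + b *\<^sub>R y)"
      using norm_triangle_ineq2[of "a *\<^sub>R (x + y)" "(a - b) *\<^sub>R y"] that by simp
    then have "a * norm x + b * norm y \<le> norm (a *\<^sub>R x + b *\<^sub>R y)"
      using that(1) by (simp add: tea_pair_def algebra_simps)
    then show ?thesis
      using norm_triangle_ineq[of "a *\<^sub>R x" "b *\<^sub>R y"] that by (simp add: tea_pair_def)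
  qed
  show ?thesis
  proof (cases "b \<le> a")
    case True
    then show ?thesis using le t assms by blast
  next
    case False
    then have "tea_pair (b *\<^sub>R y) (a *\<^sub>R x)"
      using le[of y x a b] t assms tea_pair_commute by force
    then show ?thesis using tea_pair_commute by blast
  qed
qed

lemma parallel_pair_iff_tea_pair:
  "parallel_pair x y \<longleftrightarrow> tea_pair x y \<or> tea_pair x (- y)"
proof
  assume "parallel_pair x y"
  then obtain c :: real where c: "\<bar>c\<bar> = 1" "norm (x + c *\<^sub>R y) = norm x + norm y"
    unfolding parallel_pair_def by blast
  then have "c = 1 \<or> c = - 1" by linarith
  then show "tea_pair x y \<or> tea_pair x (- y)" using c(2) by (auto simp: tea_pair_def)
next
  assume "tea_pair x y \<or> tea_pair x (- y)"
  then have "norm (x + 1 *\<^sub>R y) = norm x + norm y \<or> norm (x + (- 1) *\<^sub>R y) = norm x + norm y"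
    by (auto simp: tea_pair_def)
  then show "parallel_pair x y" unfolding parallel_pair_def by (metis abs_minus abs_one)
qed

lemma tea_pair_if_parallel_pair_short:
  assumes "parallel_pair x y" and "norm (x - y) < norm x + norm y"
  shows "tea_pair x y"
  using assms unfolding parallel_pair_iff_tea_pair tea_pair_def by auto

lemma dual_unit_ball_norming_closed_segment:
  assumes g: "g \<in> dual_unit_ball" and "g a = norm a" "g b = norm b" and x: "x \<in> closed_segment a b"
  shows "g x = norm x"
proof -
  obtain u where u: "0 \<le> u" "u \<le> 1" "x = (1 - u) *\<^sub>R a + u *\<^sub>R b"
    using x by (auto simp: in_segment)
  have lg: "linear g" using dual_unit_ballD(1)[OF g] .
  have "g x = (1 - u) * norm a + u * norm b"
    using u assms by (simp add: linear_add[OF lg] linear_scale[OF lg])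
  moreover have "norm x \<le> (1 - u) * norm a + u * norm b"
    using norm_triangle_ineq[of "(1 - u) *\<^sub>R a" "u *\<^sub>R b"] u by simp
  ultimately show ?thesis using dual_unit_ballD(2)[OF g, of x] by linarith
qed

lemma dual_unit_ball_norming_on_line:
  fixes y z :: "'a::real_normed_vector"
  defines "p \<equiv> \<lambda>t. y + t *\<^sub>R (z - y)"
  assumes g: "g \<in> dual_unit_ball" and "g (p a) = norm (p a)" "g (p b) = norm (p b)"
    and "a \<le> t" "t \<le> b"
  shows "g (p t) = norm (p t)"
proof (cases "a = b")
  case True
  then show ?thesis using assms by simp
next
  case False
  define u where "u = (t - a) / (b - a)"
  have u: "0 \<le> u" "u \<le> 1" using assms False by (auto simp: u_def field_simps)
  have comb: "(1 - u) *\<^sub>R p a + u *\<^sub>R p b = y + ((1 - u) * a + u * b) *\<^sub>R (z - y)"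
    by (simp add: p_def algebra_simps)
  have "u * (b - a) = t - a" using False by (simp add: u_def)
  then have "(1 - u) * a + u * b = t" by (simp add: algebra_simps)
  then have "p t = (1 - u) *\<^sub>R p a + u *\<^sub>R p b" using comb by (simp add: p_def)
  then have "p t \<in> closed_segment (p a) (p b)" using u by (auto simp: in_segment)
  then show ?thesis using dual_unit_ball_norming_closed_segment assms by blast
qed

text \<open>Functionals norming two overlapping subsegments agree at two points of the line,
  hence on the whole line.\<close>

lemma dual_unit_ball_norming_overlap:
  fixes y z :: "'a::real_normed_vector"
  defines "p \<equiv> \<lambda>t. y + t *\<^sub>R (z - y)"
  assumes g: "g \<in> dual_unit_ball" "g (p a) = norm (p a)" "g (p b) = norm (p b)"
    and h: "h \<in> dual_unit_ball" "h (p c) = norm (p c)" "h (p d) = norm (p d)"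
    and ord: "a \<le> c" "c < b" "b \<le> d"
  shows "g (p d) = norm (p d)"
proof -
  have affine: "f (p t) = f y + t * f (z - y)" if "f \<in> dual_unit_ball" for f t
    using dual_unit_ballD(1)[OF that] by (simp add: p_def linear_add linear_scale)
  have "g (p c) = h (p c)" "g (p b) = h (p b)"
    using dual_unit_ball_norming_on_line[where g = g and a = a and b = b and t = c]
      dual_unit_ball_norming_on_line[where g = h and a = c and b = d and t = b]
      g h ord unfolding p_def by auto
  then have c: "g y + c * g (z - y) = h y + c * h (z - y)"
    and b: "g y + b * g (z - y) = h y + b * h (z - y)"
    using affine g(1) h(1) by auto
  then have "b * g (z - y) + c * h (z - y) = b * h (z - y) + c * g (z - y)" by linarith
  then have "(b - c) * (g (z - y) - h (z - y)) = 0" by (simp add: algebra_simps)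
  then have "g (z - y) = h (z - y)" "g y = h y" using \<open>c < b\<close> c by auto
  then have "g (p d) = h (p d)" using affine[OF g(1), of d] affine[OF h(1), of d] by simp
  then show ?thesis using h(3) by simp
qed

lemma tea_pair_if_locally_tea_on_segment:
  fixes y z :: "'a::real_normed_vector" and n :: nat
  defines "p \<equiv> \<lambda>t. y + t *\<^sub>R (z - y)"
  assumes fd: "fin_dim_space TYPE('a)" and "n > 0"
    and short: "\<And>s t. 0 \<le> s \<Longrightarrow> s \<le> 1 \<Longrightarrow> 0 \<le> t \<Longrightarrow> t \<le> 1 \<Longrightarrow> \<bar>s - t\<bar> \<le> 2 / n
      \<Longrightarrow> tea_pair (p s) (p t)"
  shows "tea_pair y z"
proof -
  have chain: "\<exists>g\<in>dual_unit_ball. g (p 0) = norm (p 0) \<and> g (p (k / n)) = norm (p (k / n))"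
    if "k \<le> n" for k
    using that
  proof (induction k)
    case 0
    obtain g where "g \<in> dual_unit_ball" "g y = norm y" using fin_dim_norming_functional[OF fd] .
    then show ?case by (intro bexI[of _ g]) (simp_all add: p_def)
  next
    case (Suc k)
    show ?case
    proof (cases "k = 0")
      case True
      then have "tea_pair (p 0) (p (1 / n))" using \<open>n > 0\<close> by (intro short) (auto simp: divide_right_mono)
      then show ?thesis unfolding fin_dim_tea_pair_iff_common_norming[OF fd] using True by simp
    next
      case False
      obtain g where g: "g \<in> dual_unit_ball" "g (p 0) = norm (p 0)" "g (p (k / n)) = norm (p (k / n))"
        using Suc by auto
      have "tea_pair (p ((real k - 1) / n)) (p ((real k + 1) / n))"
        using False Suc.prems \<open>n > 0\<close> by (intro short) (auto simp: field_simps)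
      then obtain h where h: "h \<in> dual_unit_ball" "h (p ((real k - 1) / n)) = norm (p ((real k - 1) / n))"
          "h (p ((real k + 1) / n)) = norm (p ((real k + 1) / n))"
        unfolding fin_dim_tea_pair_iff_common_norming[OF fd] by blast
      have "0 \<le> (real k - 1) / n" "(real k - 1) / n < k / n" "k / n \<le> (real k + 1) / n"
        using False \<open>n > 0\<close> by (simp_all add: divide_right_mono divide_strict_right_mono)
      from dual_unit_ball_norming_overlap[OF g[unfolded p_def] h[unfolded p_def] this]
      have "g (p ((real k + 1) / n)) = norm (p ((real k + 1) / n))" by (simp add: p_def)
      then show ?thesis using g(1,2) by (auto simp: add.commute)
    qed
  qed
  obtain g where "g \<in> dual_unit_ball" "g (p 0) = norm (p 0)" "g (p (n / n)) = norm (p (n / n))"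
    using chain[of n] by blast
  then have "g \<in> dual_unit_ball" "g y = norm y" "g z = norm z"
    using \<open>n > 0\<close> by (simp_all add: p_def)
  then show ?thesis by (rule tea_pair_if_common_norming)
qed

theorem tea_pair_if_pairwise_parallel_segment:
  fixes y z :: "'a::real_normed_vector"
  assumes fd: "fin_dim_space TYPE('a)" and z0: "0 \<notin> closed_segment y z"
    and par: "\<forall>p\<in>closed_segment y z. \<forall>q\<in>closed_segment y z. parallel_pair p q"
  shows "tea_pair y z"
proof -
  define p where "p t = y + t *\<^sub>R (z - y)" for t
  have seg: "p t \<in> closed_segment y z" if "0 \<le> t" "t \<le> 1" for t
    using that by (auto simp: in_segment p_def algebra_simps intro!: exI[of _ t])
  obtain s0 where s0: "s0 \<in> closed_segment y z" "\<forall>s\<in>closed_segment y z. norm s0 \<le> norm s"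
    using continuous_attains_inf[OF compact_segment _ continuous_on_norm_id] by blast
  define m where "m = norm s0"
  have "m > 0" using s0(1) z0 by (auto simp: m_def)
  obtain n :: nat where n: "norm (z - y) / m < n" using reals_Archimedean2 by blast
  then have "n > 0" using \<open>m > 0\<close> by (smt (verit) divide_nonneg_pos norm_ge_zero of_nat_0_less_iff)
  have short: "tea_pair (p s) (p t)" if "0 \<le> s" "s \<le> 1" "0 \<le> t" "t \<le> 1" "\<bar>s - t\<bar> \<le> 2 / n" for s t
  proof (rule tea_pair_if_parallel_pair_short)
    show "parallel_pair (p s) (p t)" using par seg that by blast
    have "norm (p s - p t) = \<bar>s - t\<bar> * norm (z - y)"
      by (simp add: p_def flip: scaleR_diff_left)
    also have "\<dots> \<le> 2 / n * norm (z - y)" using mult_right_mono[OF that(5) norm_ge_zero] by simp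
    also have "\<dots> < 2 * m" using n \<open>m > 0\<close> \<open>n > 0\<close> by (simp add: field_simps)
    also have "\<dots> \<le> norm (p s) + norm (p t)"
      using s0(2) seg[of s] seg[of t] that unfolding m_def by (metis add_mono mult_2)
    finally show "norm (p s - p t) < norm (p s) + norm (p t)" .
  qed
  then show ?thesis using tea_pair_if_locally_tea_on_segment[OF fd \<open>n > 0\<close>] unfolding p_def by blast
qed

subsection \<open>Faces of the unit ball\<close>

lemma convex_combination_eq_max:
  fixes a b M t :: real
  assumes "0 < t" "t < 1" "a \<le> M" "b \<le> M" "(1 - t) * a + t * b = M"
  shows "a = M" and "b = M"
proof -
  have "(1 - t) * (M - a) + t * (M - b) = 0" using assms(5) by (simp add: algebra_simps)
  moreover have "0 \<le> (1 - t) * (M - a)" "0 \<le> t * (M - b)" using assms by simp_all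
  ultimately have "(1 - t) * (M - a) = 0" "t * (M - b) = 0" by linarith+
  then show "a = M" "b = M" using assms(1,2) by simp_all
qed

lemma ball_faceD:
  assumes "ball_face F"
  shows "F \<noteq> {}" and "convex F" and "F \<subseteq> sphere 0 1"
    and "\<lbrakk>x1 \<in> sphere 0 1; x2 \<in> sphere 0 1; 0 < t; t < 1; (1 - t) *\<^sub>R x1 + t *\<^sub>R x2 \<in> F\<rbrakk>
      \<Longrightarrow> x1 \<in> F \<and> x2 \<in> F"
  using assms unfolding ball_face_def by blast+

lemma ball_face_tea_pair:
  assumes F: "ball_face F" and "p \<in> F" "q \<in> F"
  shows "tea_pair p q"
proof -
  have sF: "F \<subseteq> sphere 0 1" and "convex F" using F by (auto simp: ball_face_def)
  then have "(1/2) *\<^sub>R (p + q) \<in> F"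
    using convexD[of F p q "1/2" "1/2"] assms by (simp add: scaleR_add_right)
  moreover have "p \<in> sphere 0 1" "q \<in> sphere 0 1" using sF assms by auto
  ultimately show ?thesis using sF by (auto simp: tea_pair_def)
qed

lemma ball_face_exposed:
  assumes g: "g \<in> dual_unit_ball" and x0: "norm x0 = 1" "g x0 = 1"
  shows "ball_face {z \<in> sphere 0 1. g z = 1}"
  unfolding ball_face_def
proof (intro conjI ballI allI impI)
  have lg: "linear g" by (rule dual_unit_ballD(1)[OF g])
  show "{z \<in> sphere 0 1. g z = 1} \<noteq> {}" using x0 by auto
  show "{z \<in> sphere 0 1. g z = 1} \<subseteq> sphere 0 1" by auto
  show "convex {z \<in> sphere 0 1. g z = 1}"
  proof (rule convexI)
    fix x y :: 'a and u v :: real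
    assume xy: "x \<in> {z \<in> sphere 0 1. g z = 1}" "y \<in> {z \<in> sphere 0 1. g z = 1}"
      and uv: "0 \<le> u" "0 \<le> v" "u + v = 1"
    then have "g (u *\<^sub>R x + v *\<^sub>R y) = 1" by (simp add: linear_add[OF lg] linear_scale[OF lg])
    moreover have "norm (u *\<^sub>R x + v *\<^sub>R y) \<le> 1"
      using norm_triangle_ineq[of "u *\<^sub>R x" "v *\<^sub>R y"] xy uv by simp
    ultimately show "u *\<^sub>R x + v *\<^sub>R y \<in> {z \<in> sphere 0 1. g z = 1}"
      using dual_unit_ballD(2)[OF g, of "u *\<^sub>R x + v *\<^sub>R y"] by simp
  qed
  fix x1 x2 :: 'a and t :: real
  assume x12: "x1 \<in> sphere 0 1" "x2 \<in> sphere 0 1"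
    and t: "0 < t \<and> t < 1 \<and> (1 - t) *\<^sub>R x1 + t *\<^sub>R x2 \<in> {z \<in> sphere 0 1. g z = 1}"
  have "(1 - t) * g x1 + t * g x2 = 1" using t by (simp add: linear_add[OF lg] linear_scale[OF lg])
  moreover have "g x1 \<le> 1" "g x2 \<le> 1" using dual_unit_ballD(2)[OF g] x12 by (metis mem_sphere_0)+
  ultimately have "g x1 = 1" "g x2 = 1" using convex_combination_eq_max[of t "g x1" 1 "g x2"] t by auto
  then show "x1 \<in> {z \<in> sphere 0 1. g z = 1}" "x2 \<in> {z \<in> sphere 0 1. g z = 1}" using x12 by auto
qed

lemma ball_face_Union_chain:
  assumes "C \<noteq> {}" and faces: "\<And>F. F \<in> C \<Longrightarrow> ball_face F"
    and chain: "\<And>X Y. X \<in> C \<Longrightarrow> Y \<in> C \<Longrightarrow> X \<subseteq> Y \<or> Y \<subseteq> X"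
  shows "ball_face (\<Union>C)"
  unfolding ball_face_def
proof (intro conjI ballI allI impI)
  obtain X where "X \<in> C" using assms(1) by blast
  then show "\<Union>C \<noteq> {}" using ball_faceD(1)[OF faces] by blast
  show "\<Union>C \<subseteq> sphere 0 1" using ball_faceD(3)[OF faces] by blast
  show "convex (\<Union>C)"
  proof (rule convexI)
    fix x y :: 'a and u v :: real
    assume xy: "x \<in> \<Union>C" "y \<in> \<Union>C" and uv: "0 \<le> u" "0 \<le> v" "u + v = 1"
    obtain Z where Z: "Z \<in> C" "x \<in> Z" "y \<in> Z" using xy chain by blast
    then have "u *\<^sub>R x + v *\<^sub>R y \<in> Z" using ball_faceD(2)[OF faces[OF Z(1)]] uv convexD by blast
    then show "u *\<^sub>R x + v *\<^sub>R y \<in> \<Union>C" using Z(1) by blast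
  qed
  fix x1 x2 :: 'a and t :: real
  assume x12: "x1 \<in> sphere 0 1" "x2 \<in> sphere 0 1"
    and t: "0 < t \<and> t < 1 \<and> (1 - t) *\<^sub>R x1 + t *\<^sub>R x2 \<in> \<Union>C"
  then obtain X where "X \<in> C" "(1 - t) *\<^sub>R x1 + t *\<^sub>R x2 \<in> X" by blast
  then have "x1 \<in> X \<and> x2 \<in> X" using ball_faceD(4)[OF faces x12] t by blast
  then show "x1 \<in> \<Union>C" "x2 \<in> \<Union>C" using \<open>X \<in> C\<close> by blast+
qed

lemma ball_face_subset_facet:
  assumes "ball_face G"
  obtains F where "ball_facet F" "G \<subseteq> F"
proof -
  let ?A = "{F. ball_face F \<and> G \<subseteq> F}"
  have "?A \<noteq> {}" using assms by blast
  then have "\<exists>M\<in>?A. \<forall>X\<in>?A. M \<subseteq> X \<longrightarrow> X = M"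
  proof (rule subset_Zorn_nonempty)
    fix C assume C: "C \<noteq> {}" "subset.chain ?A C"
    then have "C \<subseteq> ?A" "\<And>X Y. X \<in> C \<Longrightarrow> Y \<in> C \<Longrightarrow> X \<subseteq> Y \<or> Y \<subseteq> X"
      unfolding subset_chain_def by blast+
    then have "ball_face (\<Union>C)" using ball_face_Union_chain[OF C(1)] by blast
    moreover have "G \<subseteq> \<Union>C" using C(1) \<open>C \<subseteq> ?A\<close> by blast
    ultimately show "\<Union>C \<in> ?A" by blast
  qed
  then obtain M where M: "M \<in> ?A" "\<forall>X\<in>?A. M \<subseteq> X \<longrightarrow> X = M" ..
  then have "ball_facet M" unfolding ball_facet_def by blast
  then show ?thesis using that M(1) by blast
qed

lemma tea_pair_normalized_in_facet:
  fixes x y :: "'a::real_normed_vector"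
  assumes fd: "fin_dim_space TYPE('a)" and t: "tea_pair x y" and "x \<noteq> 0" "y \<noteq> 0"
  obtains F where "ball_facet F" "(1 / norm x) *\<^sub>R x \<in> F" "(1 / norm y) *\<^sub>R y \<in> F"
proof -
  have "tea_pair ((1 / norm x) *\<^sub>R x) ((1 / norm y) *\<^sub>R y)" by (rule tea_pair_scaleR[OF t]) auto
  then obtain g where g: "g \<in> dual_unit_ball"
      "g ((1 / norm x) *\<^sub>R x) = 1" "g ((1 / norm y) *\<^sub>R y) = 1"
    using assms by (auto simp: fin_dim_tea_pair_iff_common_norming[OF fd])
  have "ball_face {z \<in> sphere 0 1. g z = 1}"
    using ball_face_exposed[OF g(1) _ g(2)] assms by simp
  then obtain F where "ball_facet F" "{z \<in> sphere 0 1. g z = 1} \<subseteq> F"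
    using ball_face_subset_facet by blast
  moreover have "(1 / norm x) *\<^sub>R x \<in> {z \<in> sphere 0 1. g z = 1}"
    "(1 / norm y) *\<^sub>R y \<in> {z \<in> sphere 0 1. g z = 1}"
    using g assms by auto
  ultimately show ?thesis using that by blast
qed

subsection \<open>The intrinsic core of a convex set\<close>

definition intrinsic_core :: "'a::real_vector set \<Rightarrow> 'a set" where
  "intrinsic_core F = {c \<in> F. \<forall>v\<in>F. \<exists>e>0. c + e *\<^sub>R (c - v) \<in> F}"

lemma fin_dim_subset_affine_hull_finite:
  fixes S :: "'a::real_vector set"
  assumes fd: "fin_dim_space TYPE('a)" and "p0 \<in> S"
  obtains P where "finite P" "p0 \<in> P" "P \<subseteq> S" "S \<subseteq> affine hull P"
proof -
  obtain Q where Q: "finite Q" "Q \<subseteq> (\<lambda>x. x - p0) ` S" "(\<lambda>x. x - p0) ` S \<subseteq> span Q"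
    using fin_dim_space_obtain_finite_basis[OF fd] by metis
  define P where "P = insert p0 ((\<lambda>q. p0 + q) ` Q)"
  have "affine hull P = (\<lambda>x. p0 + x) ` span Q"
    unfolding P_def affine_hull_insert_span_gen image_image by simp
  then have "S \<subseteq> affine hull P" using Q(3) by (force simp: image_iff)
  moreover have "P \<subseteq> S" "finite P" "p0 \<in> P" using Q(1,2) assms(2) by (auto simp: P_def)
  ultimately show ?thesis using that by blast
qed

lemma barycenter_in_intrinsic_core:
  fixes F :: "'a::real_vector set"
  assumes P: "finite P" "P \<noteq> {}" "P \<subseteq> F" "F \<subseteq> affine hull P" and "convex F"
  shows "(\<Sum>p\<in>P. (1 / real (card P)) *\<^sub>R p) \<in> intrinsic_core F"
proof -
  define K where "K = real (card P)"
  have K: "K > 0" using P(1,2) by (auto simp: K_def card_gt_0_iff)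
  define c where "c = (\<Sum>p\<in>P. (1 / K) *\<^sub>R p)"
  have inF: "(\<Sum>p\<in>P. \<beta> p *\<^sub>R p) \<in> F" if "sum \<beta> P = 1" "\<And>p. p \<in> P \<Longrightarrow> 0 \<le> \<beta> p" for \<beta>
    using convex_sum[OF P(1) assms(5) that, where y = "\<lambda>p. p"] P(3) by auto
  have "c \<in> F" unfolding c_def
  proof (rule inF)
    show "(\<Sum>p\<in>P. 1 / K) = 1" using K by (simp add: K_def)
  qed (use K in simp)
  moreover have "\<exists>e>0. c + e *\<^sub>R (c - v) \<in> F" if "v \<in> F" for v
  proof -
    have "v \<in> affine hull P" using P(4) that by blast
    then obtain \<mu> where \<mu>: "sum \<mu> P = 1" "(\<Sum>p\<in>P. \<mu> p *\<^sub>R p) = v"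
      unfolding affine_hull_finite[OF P(1)] by blast
    define A where "A = (\<Sum>p\<in>P. \<bar>\<mu> p\<bar>) + 1"
    have A: "A \<ge> 1" by (simp add: A_def sum_nonneg)
    define e where "e = 1 / (K * A)"
    have e: "e > 0" "e * A = 1 / K" using K A by (simp_all add: e_def)
    define \<beta> where "\<beta> p = (1 + e) / K - e * \<mu> p" for p
    have "(\<Sum>p\<in>P. \<beta> p *\<^sub>R p) = (\<Sum>p\<in>P. ((1 + e) / K) *\<^sub>R p - (e * \<mu> p) *\<^sub>R p)"
      unfolding \<beta>_def scaleR_diff_left ..
    also have "\<dots> = (\<Sum>p\<in>P. ((1 + e) / K) *\<^sub>R p) - (\<Sum>p\<in>P. (e * \<mu> p) *\<^sub>R p)"
      by (rule sum_subtractf)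
    also have "\<dots> = (1 + e) *\<^sub>R c - e *\<^sub>R v"
      by (simp add: c_def \<mu>(2)[symmetric] scaleR_sum_right)
    finally have eq: "c + e *\<^sub>R (c - v) = (\<Sum>p\<in>P. \<beta> p *\<^sub>R p)" by (simp add: algebra_simps)
    have "sum \<beta> P = K * ((1 + e) / K) - e * sum \<mu> P"
      by (simp add: \<beta>_def sum_subtractf sum_distrib_left K_def)
    then have sum1: "sum \<beta> P = 1" using K \<mu>(1) by simp
    have "0 \<le> \<beta> p" if "p \<in> P" for p
    proof -
      have "\<bar>\<mu> p\<bar> \<le> A" using member_le_sum[OF that, of "\<lambda>p. \<bar>\<mu> p\<bar>"] P(1) by (simp add: A_def)
      then have "e * \<mu> p \<le> 1 / K" using e mult_left_mono[of "\<mu> p" A e] by (simp add: abs_le_iff)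
      moreover have "0 \<le> e / K" using e K by simp
      ultimately show ?thesis by (simp add: \<beta>_def add_divide_distrib)
    qed
    then show ?thesis using inF[OF sum1] e(1) eq by auto
  qed
  ultimately show ?thesis by (simp add: intrinsic_core_def c_def K_def)
qed


lemma fin_dim_intrinsic_core_nonempty:
  fixes F :: "'a::real_vector set"
  assumes fd: "fin_dim_space TYPE('a)" and "convex F" and "F \<noteq> {}"
  obtains c where "c \<in> intrinsic_core F"
proof -
  obtain p0 where "p0 \<in> F" using assms(3) by blast
  then obtain P where "finite P" "p0 \<in> P" "P \<subseteq> F" "F \<subseteq> affine hull P"
    using fin_dim_subset_affine_hull_finite[OF fd] by blast
  then show ?thesis using barycenter_in_intrinsic_core[OF _ _ _ _ assms(2)] that by blast
qed

lemma intrinsic_core_convex_combination: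
  assumes "c \<in> intrinsic_core F" and "v \<in> F"
  obtains w t where "w \<in> F" "0 < t" "t < 1" "c = (1 - t) *\<^sub>R w + t *\<^sub>R v"
proof -
  obtain e where e: "e > 0" "c + e *\<^sub>R (c - v) \<in> F"
    using assms by (auto simp: intrinsic_core_def)
  have "c = (1 - e / (1 + e)) *\<^sub>R (c + e *\<^sub>R (c - v)) + (e / (1 + e)) *\<^sub>R v"
    using e(1) by (simp add: field_simps algebra_simps flip: scaleR_add_left)
  moreover have "0 < e / (1 + e)" "e / (1 + e) < 1" using e(1) by simp_all
  ultimately show ?thesis using that e(2) by blast
qed

subsection \<open>Extreme points of the unit ball\<close>

lemma fin_dim_separating_functionals:
  assumes fd: "fin_dim_space TYPE('a)"
  obtains B :: "'a::real_normed_vector set" and \<phi> :: "'a \<Rightarrow> 'a \<Rightarrow> real"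
  where "finite B" "\<And>b. bounded_linear (\<phi> b)" "\<And>x y. (\<And>b. b \<in> B \<Longrightarrow> \<phi> b x = \<phi> b y) \<Longrightarrow> x = y"
proof -
  obtain B :: "'a set" where B: "finite B" "independent B" "UNIV \<subseteq> span B"
    using fin_dim_space_obtain_finite_basis[OF fd] by metis
  define \<phi> where "\<phi> b x = representation B x b" for b x
  have lin: "linear (\<phi> b)" for b
    unfolding \<phi>_def using B(3)
    by (intro linearI) (simp_all add: representation_add[OF B(2)] representation_scale[OF B(2)] subset_eq)
  have rep: "x = (\<Sum>b\<in>B. \<phi> b x *\<^sub>R b)" for x
    unfolding \<phi>_def using sum_representation_eq[OF B(2) _ B(1) order.refl, of x] B(3)
    by (metis UNIV_I subsetD)
  have "x = y" if "\<And>b. b \<in> B \<Longrightarrow> \<phi> b x = \<phi> b y" for x y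
    using rep[of x] rep[of y] that by (metis (no_types, lifting) sum.cong)
  then show ?thesis using that[of B \<phi>] B(1) fin_dim_linear_bounded[OF fd lin] by blast
qed

lemma fin_dim_extreme_point_exists:
  fixes K :: "'a::real_normed_vector set"
  assumes fd: "fin_dim_space TYPE('a)" and K: "compact K" "K \<noteq> {}"
  obtains e where "e extreme_point_of K"
proof -
  obtain B :: "'a set" and \<phi> :: "'a \<Rightarrow> 'a \<Rightarrow> real" where B: "finite B" and bl: "\<And>b. bounded_linear (\<phi> b)"
    and sep: "\<And>x y. (\<And>b. b \<in> B \<Longrightarrow> \<phi> b x = \<phi> b y) \<Longrightarrow> x = y"
    using fin_dim_separating_functionals[OF fd] by blast
  have lin: "linear (\<phi> b)" for b by (rule bounded_linear.linear[OF bl])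
  define f where "f x = (\<Sum>b\<in>B. (\<phi> b x)\<^sup>2)" for x
  have "continuous_on K f"
    unfolding f_def by (intro continuous_intros linear_continuous_on bl)
  then obtain e where e: "e \<in> K" "\<And>x. x \<in> K \<Longrightarrow> f x \<le> f e"
    using continuous_attains_sup[OF K] by blast
  have "e \<notin> open_segment a b" if ab: "a \<in> K" "b \<in> K" for a b
  proof
    assume "e \<in> open_segment a b"
    then obtain u where "a \<noteq> b" "0 < u" "u < 1" and eu: "e = (1 - u) *\<^sub>R a + u *\<^sub>R b"
      by (auto simp: in_segment)
    \<comment> \<open>f is strictly convex: its defect along the segment is a positive multiple of a sum of squares\<close>
    have \<phi>e: "\<phi> c e = (1 - u) * \<phi> c a + u * \<phi> c b" for c
      by (simp add: eu linear_add[OF lin] linear_scale[OF lin])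
    have "(\<phi> c e)\<^sup>2 = (1 - u) * (\<phi> c a)\<^sup>2 + u * (\<phi> c b)\<^sup>2 - u * (1 - u) * (\<phi> c a - \<phi> c b)\<^sup>2"
      for c by (simp only: \<phi>e) (simp add: power2_eq_square algebra_simps)
    then have fe: "f e = (1 - u) * f a + u * f b - u * (1 - u) * (\<Sum>c\<in>B. (\<phi> c a - \<phi> c b)\<^sup>2)"
      by (simp add: f_def sum.distrib sum_subtractf sum_distrib_left)
    obtain c where c: "c \<in> B" "\<phi> c a \<noteq> \<phi> c b" using sep[of a b] \<open>a \<noteq> b\<close> by blast
    have "0 < (\<phi> c a - \<phi> c b)\<^sup>2" using c by simp
    also have "\<dots> \<le> (\<Sum>c\<in>B. (\<phi> c a - \<phi> c b)\<^sup>2)" using B c(1) by (intro member_le_sum) auto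
    finally have "0 < u * (1 - u) * (\<Sum>c\<in>B. (\<phi> c a - \<phi> c b)\<^sup>2)" using \<open>0 < u\<close> \<open>u < 1\<close> by simp
    moreover have "(1 - u) * f a + u * f b \<le> (1 - u) * f e + u * f e"
      using e(2) ab \<open>0 < u\<close> \<open>u < 1\<close> by (intro add_mono mult_left_mono) auto
    ultimately show False using fe by (simp add: algebra_simps)
  qed
  then show ?thesis using that e(1) unfolding extreme_point_of_def by blast
qed

lemma fin_dim_linear_max_at_extreme_point:
  fixes \<psi> :: "'a::real_normed_vector \<Rightarrow> real"
  assumes fd: "fin_dim_space TYPE('a)" and l: "linear \<psi>"
  obtains e where "e extreme_point_of cball 0 1" "\<And>x. x \<in> cball 0 1 \<Longrightarrow> \<psi> x \<le> \<psi> e"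
proof -
  have cB: "compact (cball (0::'a) 1)" by (rule fin_dim_compact_cball[OF fd])
  have c\<psi>: "continuous_on UNIV \<psi>" using fin_dim_linear_bounded[OF fd l] linear_continuous_on by blast
  obtain x0 where x0: "x0 \<in> cball 0 1" "\<forall>x\<in>cball 0 1. \<psi> x \<le> \<psi> x0"
    using continuous_attains_sup[OF cB _ continuous_on_subset[OF c\<psi>]] by fastforce
  define M where "M = cball 0 1 \<inter> {x. \<psi> x = \<psi> x0}"
  have "compact M" unfolding M_def
    using cB by (intro compact_Int_closed closed_Collect_eq continuous_on_const c\<psi>)
  moreover have "M \<noteq> {}" using x0 by (auto simp: M_def)
  ultimately obtain e where e: "e extreme_point_of M" using fin_dim_extreme_point_exists[OF fd] by blast
  then have eM: "e \<in> M" by (simp add: extreme_point_of_def)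
  have "e \<notin> open_segment a b" if ab: "a \<in> cball 0 1" "b \<in> cball 0 1" for a b
  proof
    assume es: "e \<in> open_segment a b"
    then obtain u where u: "0 < u" "u < 1" and "e = (1 - u) *\<^sub>R a + u *\<^sub>R b"
      by (auto simp: in_segment)
    then have "(1 - u) * \<psi> a + u * \<psi> b = \<psi> x0"
      using eM by (simp add: M_def linear_add[OF l] linear_scale[OF l])
    then have "\<psi> a = \<psi> x0" "\<psi> b = \<psi> x0"
      using convex_combination_eq_max[OF u] x0(2) ab by blast+
    then have "a \<in> M" "b \<in> M" using ab by (auto simp: M_def)
    then show False using e es by (simp add: extreme_point_of_def)
  qed
  then have "e extreme_point_of cball 0 1" using eM by (simp add: extreme_point_of_def M_def)
  moreover have "\<psi> x \<le> \<psi> e" if "x \<in> cball 0 1" for x using x0 eM that by (simp add: M_def)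
  ultimately show ?thesis using that by blast
qed

lemma fin_dim_dual_unit_ball_if_extreme_points_le_one:
  fixes g :: "'a::real_normed_vector \<Rightarrow> real"
  assumes fd: "fin_dim_space TYPE('a)" and lg: "linear g"
    and ext: "\<And>e. e extreme_point_of cball 0 1 \<Longrightarrow> g e \<le> 1"
  shows "g \<in> dual_unit_ball"
proof -
  obtain e where "e extreme_point_of cball 0 1" "\<And>x. x \<in> cball 0 1 \<Longrightarrow> g x \<le> g e"
    using fin_dim_linear_max_at_extreme_point[OF fd lg] by blast
  then have ball: "g x \<le> 1" if "x \<in> cball 0 1" for x using ext that by fastforce
  have "g x \<le> norm x" for x
  proof (cases "x = 0")
    case True
    then show ?thesis using linear_0[OF lg] by simp
  next
    case False
    then have "g ((1 / norm x) *\<^sub>R x) \<le> 1" by (intro ball) simp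
    then show ?thesis using False by (simp add: linear_scale[OF lg] field_simps)
  qed
  then show ?thesis using lg by (simp add: dual_unit_ball_def)
qed

lemma finite_tilt_touching:
  fixes g h :: "'a \<Rightarrow> real"
  assumes "finite E" and "\<And>e. e \<in> E \<Longrightarrow> g e \<le> 1" and "e0 \<in> E" "h e0 > 0"
  obtains \<epsilon> es where "es \<in> E" "h es > 0" "g es + \<epsilon> * h es = 1"
    "\<And>e. e \<in> E \<Longrightarrow> g e + \<epsilon> * h e \<le> 1"
proof -
  define Ep where "Ep = {e \<in> E. h e > 0}"
  define r where "r e = (1 - g e) / h e" for e
  have Ep: "finite Ep" "e0 \<in> Ep" using assms by (simp_all add: Ep_def)
  obtain es where es: "es \<in> Ep" "\<And>e. e \<in> Ep \<Longrightarrow> r es \<le> r e"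
    using ex_min_if_finite[of "r ` Ep"] Ep by (metis empty_iff finite_imageI image_eqI imageE not_le)
  have "0 \<le> r es" using es(1) assms(2) by (simp add: Ep_def r_def)
  moreover have "g es + r es * h es = 1" using es(1) by (simp add: Ep_def r_def)
  moreover have "g e + r es * h e \<le> 1" if "e \<in> E" for e
  proof (cases "h e > 0")
    case True
    then have "r es * h e \<le> r e * h e" using es(2) that by (simp add: Ep_def)
    then show ?thesis using True by (simp add: r_def)
  next
    case False
    then show ?thesis using assms(2)[OF that] \<open>0 \<le> r es\<close> by (smt (verit) mult_nonneg_nonpos)
  qed
  ultimately show ?thesis using that es(1) unfolding Ep_def by blast
qed

lemma fin_dim_ball_face_supporting_functional:
  fixes F :: "'a::real_normed_vector set"
  assumes fd: "fin_dim_space TYPE('a)" and F: "ball_face F"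
  obtains g where "g \<in> dual_unit_ball" "\<And>v. v \<in> F \<Longrightarrow> g v = 1"
proof -
  obtain c where c: "c \<in> intrinsic_core F"
    using fin_dim_intrinsic_core_nonempty[OF fd ball_faceD(2,1)[OF F]] by blast
  then have "c \<in> F" by (simp add: intrinsic_core_def)
  obtain g where g: "g \<in> dual_unit_ball" "g c = norm c"
    using fin_dim_norming_functional[OF fd] by blast
  have "g v = 1" if v: "v \<in> F" for v
  proof -
    obtain w t where "w \<in> F" "0 < t" "t < 1" "c = (1 - t) *\<^sub>R w + t *\<^sub>R v"
      using intrinsic_core_convex_combination[OF c v] by blast
    moreover have "norm c = 1" "norm w = 1" "norm v = 1"
      using ball_faceD(3)[OF F] \<open>c \<in> F\<close> \<open>w \<in> F\<close> v by auto
    ultimately have "(1 - t) * g w + t * g v = 1"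
      using g by (simp add: linear_add[OF dual_unit_ballD(1)] linear_scale[OF dual_unit_ballD(1)])
    moreover have "g w \<le> 1" "g v \<le> 1"
      using dual_unit_ballD(2)[OF g(1), of w] dual_unit_ballD(2)[OF g(1), of v] \<open>norm w = 1\<close> \<open>norm v = 1\<close>
      by simp_all
    ultimately show ?thesis using convex_combination_eq_max(2) \<open>0 < t\<close> \<open>t < 1\<close> by blast
  qed
  then show ?thesis using that g(1) by blast
qed

lemma polyhedral_tilt_dual_functional:
  fixes g h :: "'a::real_normed_vector \<Rightarrow> real"
  assumes fd: "fin_dim_space TYPE('a)" and poly: "polyhedral_space TYPE('a)"
    and g: "g \<in> dual_unit_ball" and h: "linear h" "h x0 > 0"
  obtains g' es where "g' \<in> dual_unit_ball" "\<And>x. h x = 0 \<Longrightarrow> g' x = g x"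
    "norm es = 1" "g' es = 1" "h es > 0"
proof -
  obtain e0 where e0: "e0 extreme_point_of cball 0 1" "\<And>x. x \<in> cball 0 1 \<Longrightarrow> h x \<le> h e0"
    using fin_dim_linear_max_at_extreme_point[OF fd h(1)] by blast
  have "x0 \<noteq> 0" using h linear_0 by force
  then have "0 < h ((1 / norm x0) *\<^sub>R x0)" using h by (simp add: linear_scale[OF h(1)])
  also have "\<dots> \<le> h e0" using e0(2) \<open>x0 \<noteq> 0\<close> by simp
  finally have "h e0 > 0" .
  let ?E = "{x. x extreme_point_of cball (0::'a) 1}"
  have fin: "finite ?E" using poly by (simp add: polyhedral_space_def)
  have le1: "g e \<le> 1" if "e \<in> ?E" for e
    using that dual_unit_ballD(2)[OF g, of e] by (auto simp: extreme_point_of_def)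
  have "e0 \<in> ?E" using e0(1) by simp
  from finite_tilt_touching[where g = g and h = h, OF fin le1 this \<open>h e0 > 0\<close>]
  obtain \<epsilon> es where tilt: "es \<in> ?E" "h es > 0" "g es + \<epsilon> * h es = 1"
      "\<And>e. e \<in> ?E \<Longrightarrow> g e + \<epsilon> * h e \<le> 1"
    by blast
  define g' where "g' x = g x + \<epsilon> * h x" for x
  have lg': "linear g'" unfolding g'_def
    by (intro linearI) (simp_all add: linear_add[OF dual_unit_ballD(1)[OF g]] linear_add[OF h(1)]
        linear_scale[OF dual_unit_ballD(1)[OF g]] linear_scale[OF h(1)] algebra_simps)
  have g': "g' \<in> dual_unit_ball"
    using fin_dim_dual_unit_ball_if_extreme_points_le_one[OF fd lg'] tilt(4) by (simp add: g'_def)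
  have "norm es = 1"
    using tilt(1,3) dual_unit_ballD(2)[OF g', of es] by (auto simp: g'_def extreme_point_of_def)
  then show ?thesis using that[OF g'] tilt(2,3) by (simp add: g'_def)
qed

theorem polyhedral_facet_span:
  fixes F :: "'a::real_normed_vector set"
  assumes fd: "fin_dim_space TYPE('a)" and poly: "polyhedral_space TYPE('a)" and F: "ball_facet F"
  shows "span F = UNIV"
proof (rule ccontr)
  assume "span F \<noteq> UNIV"
  then obtain x0 where x0: "x0 \<notin> span F" by blast
  have bf: "ball_face F" using F by (simp add: ball_facet_def)
  obtain g where g: "g \<in> dual_unit_ball" "\<And>v. v \<in> F \<Longrightarrow> g v = 1"
    using fin_dim_ball_face_supporting_functional[OF fd bf] by blast
  obtain h :: "'a \<Rightarrow> real" where h: "linear h" "\<And>v. v \<in> span F \<Longrightarrow> h v = 0" "h x0 = 1"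
    using exists_linear_functional_vanishing_on_span[OF x0] by blast
  \<comment> \<open>tilting g towards h until it touches a new extreme point exposes a face strictly larger than F\<close>
  obtain g' es where g': "g' \<in> dual_unit_ball" "\<And>x. h x = 0 \<Longrightarrow> g' x = g x"
    and es: "norm es = 1" "g' es = 1" "h es > 0"
    using polyhedral_tilt_dual_functional[OF fd poly g(1) h(1), of x0] h(3) by auto
  have "ball_face {z \<in> sphere 0 1. g' z = 1}" using ball_face_exposed[OF g'(1) es(1,2)] .
  moreover have "F \<subseteq> {z \<in> sphere 0 1. g' z = 1}"
    using g(2) g'(2) h(2) ball_faceD(3)[OF bf] by (auto simp: span_base)
  ultimately have "{z \<in> sphere 0 1. g' z = 1} = F" using F by (simp add: ball_facet_def)
  then have "es \<in> F" using es by auto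
  then show False using h(2)[OF span_base] es(3) by simp
qed

subsection \<open>Convex sets of pairwise parallel vectors\<close>

lemma zero_in_closed_segment_opposite:
  assumes "0 \<in> closed_segment p q" and "p \<noteq> 0"
  obtains l where "0 \<le> l" "q = - l *\<^sub>R p"
proof -
  obtain s where s: "0 \<le> s" "s \<le> 1" "(1 - s) *\<^sub>R p + s *\<^sub>R q = 0"
    using assms(1) by (auto simp: in_segment)
  then have "s \<noteq> 0" using assms(2) by auto
  have "s *\<^sub>R q = - ((1 - s) *\<^sub>R p)" using s(3) by (simp add: eq_neg_iff_add_eq_0 add.commute)
  then have "(1 / s) *\<^sub>R (s *\<^sub>R q) = - ((1 - s) / s) *\<^sub>R p" by simp
  then have "q = - ((1 - s) / s) *\<^sub>R p" using \<open>s \<noteq> 0\<close> by simp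
  moreover have "0 \<le> (1 - s) / s" using s by simp
  ultimately show ?thesis using that by blast
qed

lemma zero_notin_closed_segment_off_line:
  assumes "p \<in> span {a}" "p \<noteq> 0" "q \<notin> span {a}"
  shows "0 \<notin> closed_segment p q"
proof
  assume "0 \<in> closed_segment p q"
  then obtain l where "q = - l *\<^sub>R p" using zero_in_closed_segment_opposite assms(2) by blast
  then show False using assms(1,3) by (simp add: span_scale span_neg)
qed

lemma tea_pair_in_pairwise_parallel_convex:
  fixes C :: "'a::real_normed_vector set"
  assumes fd: "fin_dim_space TYPE('a)" and "convex C"
    and par: "\<And>p q. p \<in> C \<Longrightarrow> q \<in> C \<Longrightarrow> parallel_pair p q"
    and "p \<in> C" "q \<in> C" "0 \<notin> closed_segment p q"
  shows "tea_pair p q"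
  using tea_pair_if_pairwise_parallel_segment[OF fd assms(6)] par
    closed_segment_subset[OF assms(4,5,2)] by blast

lemma tea_pair_midpoints_imp_tea_pair:
  assumes aw: "tea_pair a w" and bw: "tea_pair b w"
    and m: "tea_pair ((1/2) *\<^sub>R (a + w)) ((1/2) *\<^sub>R (b + w))"
  shows "tea_pair a b"
proof -
  have "(1/2) *\<^sub>R w + (1/2) *\<^sub>R w = w" by (simp flip: scaleR_add_left)
  then have "(1/2) *\<^sub>R (a + w) + (1/2) *\<^sub>R (b + w) = (1/2) *\<^sub>R (a + b) + w" by (simp add: algebra_simps)
  then have "(1/2) * (norm a + norm w) + (1/2) * (norm b + norm w) \<le> (1/2) * norm (a + b) + norm w"
    using m aw bw norm_triangle_ineq[of "(1/2) *\<^sub>R (a + b)" w] by (simp add: tea_pair_def)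
  then show ?thesis using norm_triangle_ineq[of a b] unfolding tea_pair_def by (simp add: field_simps)
qed

lemma not_tea_pair_opposite:
  assumes "a \<noteq> 0" and "l > 0"
  shows "\<not> tea_pair a (- l *\<^sub>R a)"
proof -
  have "a + - l *\<^sub>R a = (1 - l) *\<^sub>R a" by (simp add: algebra_simps)
  then have "norm (a + - l *\<^sub>R a) = \<bar>1 - l\<bar> * norm a" by simp
  also have "\<dots> < (1 + l) * norm a" using assms by (intro mult_strict_right_mono) auto
  finally show ?thesis using assms(2) by (simp add: tea_pair_def algebra_simps)
qed

lemma pairwise_parallel_convex_no_opposite:
  fixes C :: "'a::real_normed_vector set"
  assumes fd: "fin_dim_space TYPE('a)" and C: "convex C"
    and par: "\<And>p q. p \<in> C \<Longrightarrow> q \<in> C \<Longrightarrow> parallel_pair p q"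
    and a: "a \<in> C" "a \<noteq> 0" and opp: "- l *\<^sub>R a \<in> C" "l > 0"
    and w: "w \<in> C" "w \<notin> span {a}"
  shows False
proof -
  define b where "b = - l *\<^sub>R a"
  have b: "b \<in> C" "b \<in> span {a}" "b \<noteq> 0"
    using opp a(2) by (simp_all add: b_def span_base span_scale span_neg)
  have tea: "tea_pair p q" if "p \<in> C" "q \<in> C" "0 \<notin> closed_segment p q" for p q
    using tea_pair_in_pairwise_parallel_convex[OF fd C par that] .
  have "0 \<notin> closed_segment a w"
    using zero_notin_closed_segment_off_line[of a a w] a(2) w(2) by (simp add: span_base)
  then have aw: "tea_pair a w" using tea a(1) w(1) by blast
  have "0 \<notin> closed_segment b w" using zero_notin_closed_segment_off_line[OF b(2,3) w(2)] .
  then have bw: "tea_pair b w" using tea b(1) w(1) by blast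
  \<comment> \<open>w lifts the opposite pair a, b off the origin: the segment between the midpoints of [a,w]
    and [b,w] avoids 0, and TEA of these midpoints would force TEA of a and b\<close>
  define m1 where "m1 = (1/2) *\<^sub>R (a + w)"
  define m2 where "m2 = (1/2) *\<^sub>R (b + w)"
  have "m1 = (1/2) *\<^sub>R a + (1/2) *\<^sub>R w" "m2 = (1/2) *\<^sub>R b + (1/2) *\<^sub>R w"
    by (simp_all add: m1_def m2_def scaleR_add_right)
  then have "m1 \<in> C" "m2 \<in> C"
    using convexD[OF C a(1) w(1), of "1/2" "1/2"] convexD[OF C b(1) w(1), of "1/2" "1/2"] by simp_all
  moreover have "0 \<notin> closed_segment m1 m2"
  proof
    assume "0 \<in> closed_segment m1 m2"
    then obtain s where s: "(1 - s) *\<^sub>R m1 + s *\<^sub>R m2 = 0" by (auto simp: in_segment)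
    have "(1 - s) *\<^sub>R (a + w) + s *\<^sub>R (b + w) = (1 - s) *\<^sub>R a + s *\<^sub>R b + ((1 - s) + s) *\<^sub>R w"
      by (simp only: scaleR_add_right scaleR_add_left add_ac)
    moreover have "(1 - s) *\<^sub>R m1 + s *\<^sub>R m2 = (1/2) *\<^sub>R ((1 - s) *\<^sub>R (a + w) + s *\<^sub>R (b + w))"
      by (simp add: m1_def m2_def scaleR_add_right)
    ultimately have "(1 - s) *\<^sub>R a + s *\<^sub>R b + w = 0" using s by simp
    then have "w = - ((1 - s) *\<^sub>R a + s *\<^sub>R b)" by (metis add.commute eq_neg_iff_add_eq_0)
    moreover have "- ((1 - s) *\<^sub>R a + s *\<^sub>R b) \<in> span {a}"
      by (intro b(2) span_neg span_add span_scale span_base) simp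
    ultimately show False using w(2) by simp
  qed
  ultimately have "tea_pair m1 m2" using tea by blast
  then have "tea_pair a b" using tea_pair_midpoints_imp_tea_pair[OF aw bw] by (simp add: m1_def m2_def)
  then show False using not_tea_pair_opposite[OF a(2) opp(2)] by (simp add: b_def)
qed

lemma tea_pair_in_pairwise_parallel_convex_off_lines:
  fixes C :: "'a::real_normed_vector set"
  assumes fd: "fin_dim_space TYPE('a)" and C: "convex C"
    and par: "\<And>p q. p \<in> C \<Longrightarrow> q \<in> C \<Longrightarrow> parallel_pair p q"
    and off: "\<And>a. \<exists>w\<in>C. w \<notin> span {a}"
    and pq: "p \<in> C" "q \<in> C"
  shows "tea_pair p q"
proof (cases "0 \<in> closed_segment p q \<and> p \<noteq> 0")
  case True
  then obtain l where l: "0 \<le> l" "q = - l *\<^sub>R p" using zero_in_closed_segment_opposite by blast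
  show ?thesis
  proof (cases "l = 0")
    case True
    then show ?thesis using l by (simp add: tea_pair_def)
  next
    case False
    obtain w where w: "w \<in> C" "w \<notin> span {p}" using off by blast
    have "l > 0" using l(1) False by simp
    then show ?thesis
      using pairwise_parallel_convex_no_opposite[OF fd C par pq(1) _ _ _ w, of l] True l pq(2) by simp
  qed
next
  case False
  then show ?thesis
    using tea_pair_in_pairwise_parallel_convex[OF fd C par pq] by (auto simp: tea_pair_def)
qed

subsection \<open>The three preservation properties\<close>

lemma tea_preserving_if_tea_on_facets:
  fixes T :: "'a::real_normed_vector \<Rightarrow> 'b::real_normed_vector"
  assumes fd: "fin_dim_space TYPE('a)" and lT: "linear T"
    and facets: "\<And>F p q. ball_facet F \<Longrightarrow> p \<in> F \<Longrightarrow> q \<in> F \<Longrightarrow> tea_pair (T p) (T q)"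
  shows "\<forall>x y. tea_pair x y \<longrightarrow> tea_pair (T x) (T y)"
proof (intro allI impI)
  fix x y :: 'a assume t: "tea_pair x y"
  show "tea_pair (T x) (T y)"
  proof (cases "x = 0 \<or> y = 0")
    case True
    then show ?thesis using linear_0[OF lT] by (auto simp: tea_pair_def)
  next
    case False
    then obtain F where "ball_facet F" "(1 / norm x) *\<^sub>R x \<in> F" "(1 / norm y) *\<^sub>R y \<in> F"
      using tea_pair_normalized_in_facet[OF fd t] by blast
    then have "tea_pair (norm x *\<^sub>R T ((1 / norm x) *\<^sub>R x)) (norm y *\<^sub>R T ((1 / norm y) *\<^sub>R y))"
      using facets by (intro tea_pair_scaleR) simp_all
    then show ?thesis using False by (simp add: linear_scale[OF lT])
  qed
qed

lemma polyhedral_facet_image_off_lines: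
  fixes T :: "'a::real_normed_vector \<Rightarrow> 'b::real_normed_vector"
  assumes fd: "fin_dim_space TYPE('a)" and poly: "polyhedral_space TYPE('a)"
    and F: "ball_facet F" and lT: "linear T" and rk: "dim (range T) \<ge> 2"
  shows "\<exists>w\<in>T ` F. w \<notin> span {a}"
proof (rule ccontr)
  assume "\<not> ?thesis"
  then have "T ` F \<subseteq> span {a}" by blast
  then have "span (T ` F) \<subseteq> span {a}" using span_mono[of "T ` F" "span {a}"] by (simp add: span_span)
  moreover have "range T = span (T ` F)"
    using span_linear_image[OF lT, of F] polyhedral_facet_span[OF fd poly F] by simp
  ultimately have "dim (range T) \<le> card {a}" using dim_le_card[of "range T" "{a}"] by simp
  then show False using rk by simp
qed

theorem parallel_preserving_imp_tea_preserving:
  fixes T :: "'a::real_normed_vector \<Rightarrow> 'b::real_normed_vector"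
  assumes fa: "fin_dim_space TYPE('a)" and fb: "fin_dim_space TYPE('b)"
    and poly: "polyhedral_space TYPE('a)" and lT: "linear T" and rk: "dim (range T) \<ge> 2"
    and PP: "\<forall>x y. parallel_pair x y \<longrightarrow> parallel_pair (T x) (T y)"
  shows "\<forall>x y. tea_pair x y \<longrightarrow> tea_pair (T x) (T y)"
proof (rule tea_preserving_if_tea_on_facets[OF fa lT])
  fix F :: "'a set" and p q assume F: "ball_facet F" and "p \<in> F" "q \<in> F"
  have bf: "ball_face F" using F by (simp add: ball_facet_def)
  have C: "convex (T ` F)" using convex_linear_image[OF lT ball_faceD(2)[OF bf]] .
  have par: "parallel_pair w z" if wz: "w \<in> T ` F" "z \<in> T ` F" for w z
  proof -
    obtain u v where "u \<in> F" "v \<in> F" "w = T u" "z = T v" using wz by blast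
    moreover have "parallel_pair u v"
      using ball_face_tea_pair[OF bf \<open>u \<in> F\<close> \<open>v \<in> F\<close>] parallel_pair_iff_tea_pair by blast
    ultimately show ?thesis using PP by blast
  qed
  have "tea_pair w z" if "w \<in> T ` F" "z \<in> T ` F" for w z
    using tea_pair_in_pairwise_parallel_convex_off_lines[OF fb C par
        polyhedral_facet_image_off_lines[OF fa poly F lT rk] that] .
  then show "tea_pair (T p) (T q)" using \<open>p \<in> F\<close> \<open>q \<in> F\<close> by blast
qed

theorem tea_preserving_imp_parallel_preserving:
  fixes T :: "'a::real_normed_vector \<Rightarrow> 'b::real_normed_vector"
  assumes lT: "linear T" and TT: "\<forall>x y. tea_pair x y \<longrightarrow> tea_pair (T x) (T y)"
  shows "\<forall>x y. parallel_pair x y \<longrightarrow> parallel_pair (T x) (T y)"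
proof (intro allI impI)
  fix x y :: 'a assume "parallel_pair x y"
  then have "tea_pair x y \<or> tea_pair x (- y)" by (simp add: parallel_pair_iff_tea_pair)
  then have "tea_pair (T x) (T y) \<or> tea_pair (T x) (- T y)" using TT linear_neg[OF lT] by metis
  then show "parallel_pair (T x) (T y)" by (simp add: parallel_pair_iff_tea_pair)
qed

theorem tea_preserving_imp_supp_J:
  fixes T :: "'a::real_normed_vector \<Rightarrow> 'b::real_normed_vector"
  assumes fa: "fin_dim_space TYPE('a)" and lT: "linear T"
    and TT: "\<forall>x y. tea_pair x y \<longrightarrow> tea_pair (T x) (T y)" and F: "ball_facet F"
  shows "\<exists>u\<in>F. \<forall>v\<in>F - {v. T v = 0}. supp_J (T u) \<subseteq> supp_J (T v)"
proof -
  have bf: "ball_face F" using F by (simp add: ball_facet_def)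
  obtain c where c: "c \<in> intrinsic_core F"
    using fin_dim_intrinsic_core_nonempty[OF fa ball_faceD(2,1)[OF bf]] by blast
  \<comment> \<open>c lies inside a segment [w,v] of F, along which the norm of T is affine by TEA preservation\<close>
  have "g \<in> supp_J (T v)" if v: "v \<in> F - {v. T v = 0}" and g: "g \<in> supp_J (T c)" for v g
  proof -
    obtain w t where w: "w \<in> F" "0 < t" "t < 1" "c = (1 - t) *\<^sub>R w + t *\<^sub>R v"
      using intrinsic_core_convex_combination[OF c] v by blast
    have "tea_pair ((1 - t) *\<^sub>R T w) (t *\<^sub>R T v)"
      using TT ball_face_tea_pair[OF bf w(1)] v w(2,3) by (intro tea_pair_scaleR) auto
    then have "norm (T c) = (1 - t) * norm (T w) + t * norm (T v)"
      using w(2,3,4) by (simp add: tea_pair_def linear_add[OF lT] linear_scale[OF lT])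
    moreover have "g (T c) = (1 - t) * g (T w) + t * g (T v)"
      using w(4) dual_unit_ballD(1)[OF supp_JD(1)[OF g]]
      by (simp add: linear_add linear_scale linear_add[OF lT] linear_scale[OF lT])
    ultimately have eq: "(1 - t) * (g (T w) - norm (T w)) + t * (g (T v) - norm (T v)) = 0"
      using supp_JD(2)[OF g] by (simp add: algebra_simps)
    have le: "g (T w) - norm (T w) \<le> 0" "g (T v) - norm (T v) \<le> 0"
      using dual_unit_ballD(2)[OF supp_JD(1)[OF g]] by simp_all
    have "g (T v) - norm (T v) = 0" using convex_combination_eq_max(2)[OF w(2,3) le eq] .
    then show ?thesis using v supp_JD(1)[OF g] by (simp add: supp_J_iff)
  qed
  then show ?thesis using c by (auto simp: intrinsic_core_def)
qed

theorem supp_J_imp_tea_preserving: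
  fixes T :: "'a::real_normed_vector \<Rightarrow> 'b::real_normed_vector"
  assumes fa: "fin_dim_space TYPE('a)" and fb: "fin_dim_space TYPE('b)" and lT: "linear T"
    and JJ: "\<forall>F. ball_facet F \<longrightarrow> (\<exists>u\<in>F. \<forall>v\<in>F - {v. T v = 0}. supp_J (T u) \<subseteq> supp_J (T v))"
  shows "\<forall>x y. tea_pair x y \<longrightarrow> tea_pair (T x) (T y)"
proof (rule tea_preserving_if_tea_on_facets[OF fa lT])
  fix F :: "'a set" and p q assume "ball_facet F" "p \<in> F" "q \<in> F"
  show "tea_pair (T p) (T q)"
  proof (cases "T p = 0 \<or> T q = 0")
    case True
    then show ?thesis by (auto simp: tea_pair_def)
  next
    case False
    obtain u where "u \<in> F" "\<forall>v\<in>F - {v. T v = 0}. supp_J (T u) \<subseteq> supp_J (T v)"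
      using JJ \<open>ball_facet F\<close> by blast
    moreover obtain g where "g \<in> supp_J (T u)" using supp_J_nonempty[OF fb] False by blast
    ultimately have "g \<in> supp_J (T p)" "g \<in> supp_J (T q)" using \<open>p \<in> F\<close> \<open>q \<in> F\<close> False by auto
    then show ?thesis using tea_pair_if_common_norming supp_JD by blast
  qed
qed

theorem mainTheorem14:
  fixes T :: "'a::banach \<Rightarrow> 'b::banach"
  assumes "fin_dim_space TYPE('a)" and "fin_dim_space TYPE('b)"
    and "polyhedral_space TYPE('a)" and "polyhedral_space TYPE('b)"
    and "linear T"
    and "dim (range T) \<ge> 2"
  shows "((\<forall>x y. parallel_pair x y \<longrightarrow> parallel_pair (T x) (T y)) \<longleftrightarrow>
          (\<forall>x y. tea_pair x y \<longrightarrow> tea_pair (T x) (T y)))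
       \<and> ((\<forall>x y. tea_pair x y \<longrightarrow> tea_pair (T x) (T y)) \<longleftrightarrow>
          (\<forall>F. ball_facet F \<longrightarrow>
             (\<exists>u\<in>F. \<forall>v\<in>F - {v. T v = 0}. supp_J (T u) \<subseteq> supp_J (T v))))"
proof (intro conjI iffI)
  assume "\<forall>x y. parallel_pair x y \<longrightarrow> parallel_pair (T x) (T y)"
  then show "\<forall>x y. tea_pair x y \<longrightarrow> tea_pair (T x) (T y)"
    by (rule parallel_preserving_imp_tea_preserving[OF assms(1,2,3,5,6)])
next
  assume "\<forall>x y. tea_pair x y \<longrightarrow> tea_pair (T x) (T y)"
  then show "\<forall>x y. parallel_pair x y \<longrightarrow> parallel_pair (T x) (T y)"
    by (rule tea_preserving_imp_parallel_preserving[OF assms(5)])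
next
  assume "\<forall>x y. tea_pair x y \<longrightarrow> tea_pair (T x) (T y)"
  then show "\<forall>F. ball_facet F \<longrightarrow> (\<exists>u\<in>F. \<forall>v\<in>F - {v. T v = 0}. supp_J (T u) \<subseteq> supp_J (T v))"
    using tea_preserving_imp_supp_J[OF assms(1,5)] by blast
next
  assume "\<forall>F. ball_facet F \<longrightarrow> (\<exists>u\<in>F. \<forall>v\<in>F - {v. T v = 0}. supp_J (T u) \<subseteq> supp_J (T v))"
  then show "\<forall>x y. tea_pair x y \<longrightarrow> tea_pair (T x) (T y)"
    by (rule supp_J_imp_tea_preserving[OF assms(1,2,5)])
qed

end
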